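(* Let $G$ be a closed and continuous cyclic graph with $\mathrm{wf}(G)=\frac pq$ ($p,q$ coprime). For every $v\in V$ and $i\ge0$: (i) $(f_i(v))^*=f_i(v^* )$; (ii) $f_i(v^* )=v^*$ if and only if $i$ is a multiple of $q$.
   Context: $S^1=\mathbb{R}/\mathbb{Z}$; $\preceq$/$\prec$ clockwise order; $\vec d(p,q)\in[0,1)$ clockwise distance. A directed graph (no loops, no opposite edges) with vertex set $V\subseteq S^1$ is cyclic if whenever $v\to u$ is an edge, $v\to w$ and $w\to u$ are edges for all $w\in V$ with $v\prec w\prec u\prec v$; $N^+[G,v]=\{v\}\cup\{w:v\to w\}$. Winding fraction $\mathrm{wf}$: for finite $G$, $\sup\{k/n:\exists$ cyclic homomorphism $C_n^k\to G\}$ ($C_n^k$: vertices $0..n-1$, edges $i\to i+s\bmod n$, $1\le s\le k<n/2$); in general the supremum over finite induced subgraphs. For $m\ge1$, $\gamma_m(v_0)=\sup\{\sum_{i=0}^{m-1}\vec d(v_i,v_{i+1}):v_{i+1}\in N^+[G,v_i]\}$, $\gamma_0=0$, $f_m(v)=(v+\gamma_m(v))\bmod1$. $G$ is closed if $V$ is closed in $S^1$, continuous if all $\gamma_m$ are continuous; then $f_m(V)\subseteq V$. For $v\in V$, $v^*=\lim_{m\to\infty}f_{mq}(v)$ (this limit exists and lies in $V$). *)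

theory Defs
  imports Complex_Main "HOL-Computational_Algebra.Primes"
begin

text \<open>The circle S^1 = R/Z is represented by the interval [0,1); a point of S^1 is
  its representative in [0,1). Clockwise = increasing direction (mod 1).\<close>

definition dcw :: "real \<Rightarrow> real \<Rightarrow> real" where
  "dcw p q = frac (q - p)"

text \<open>v \<prec> w \<prec> u \<prec> v (strict cyclic betweenness)\<close>
definition cbetween :: "real \<Rightarrow> real \<Rightarrow> real \<Rightarrow> bool" where
  "cbetween v w u \<longleftrightarrow> 0 < dcw v w \<and> dcw v w < dcw v u"

definition digraph_on :: "real set \<Rightarrow> (real \<Rightarrow> real \<Rightarrow> bool) \<Rightarrow> bool" where
  "digraph_on V E \<longleftrightarrow> V \<subseteq> {0..<1} \<and> (\<forall>v u. E v u \<longrightarrow> v \<in> V \<and> u \<in> V)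
     \<and> (\<forall>v. \<not> E v v) \<and> (\<forall>v u. E v u \<longrightarrow> \<not> E u v)"

definition cyclic_graph :: "real set \<Rightarrow> (real \<Rightarrow> real \<Rightarrow> bool) \<Rightarrow> bool" where
  "cyclic_graph V E \<longleftrightarrow> digraph_on V E \<and>
     (\<forall>v u. E v u \<longrightarrow> (\<forall>w\<in>V. cbetween v w u \<longrightarrow> E v w \<and> E w u))"

definition Nplus :: "(real \<Rightarrow> real \<Rightarrow> bool) \<Rightarrow> real \<Rightarrow> real set" where
  "Nplus E v = insert v {w. E v w}"

text \<open>Cyclic homomorphism C_n^k \<rightarrow> G: a homomorphism (edges i \<rightarrow> i+s mod n, 1 \<le> s \<le> k)
  whose image winds around the circle exactly once.\<close>
definition cyc_hom :: "nat \<Rightarrow> nat \<Rightarrow> (real \<Rightarrow> real \<Rightarrow> bool) \<Rightarrow> (nat \<Rightarrow> real) \<Rightarrow> bool" where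
  "cyc_hom n k E h \<longleftrightarrow> 1 \<le> k \<and> 2 * k < n \<and>
     (\<forall>i<n. \<forall>s. 1 \<le> s \<and> s \<le> k \<longrightarrow> E (h i) (h ((i + s) mod n))) \<and>
     (\<Sum>i<n. dcw (h i) (h ((i + 1) mod n))) = 1"

definition wf_fin :: "(real \<Rightarrow> real \<Rightarrow> bool) \<Rightarrow> real" where
  "wf_fin E = (let S = {real k / real n | k n. \<exists>h. cyc_hom n k E h}
               in if S = {} then 0 else Sup S)"

definition induced :: "(real \<Rightarrow> real \<Rightarrow> bool) \<Rightarrow> real set \<Rightarrow> real \<Rightarrow> real \<Rightarrow> bool" where
  "induced E W = (\<lambda>a b. E a b \<and> a \<in> W \<and> b \<in> W)"

definition wf :: "real set \<Rightarrow> (real \<Rightarrow> real \<Rightarrow> bool) \<Rightarrow> real" where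
  "wf V E = Sup {wf_fin (induced E W) | W. W \<subseteq> V \<and> finite W}"

definition gamma :: "(real \<Rightarrow> real \<Rightarrow> bool) \<Rightarrow> nat \<Rightarrow> real \<Rightarrow> real" where
  "gamma E m v0 = (if m = 0 then 0 else
     Sup {(\<Sum>i<m. dcw (w i) (w (Suc i))) | w.
            w 0 = v0 \<and> (\<forall>i<m. w (Suc i) \<in> Nplus E (w i))})"

definition fmap :: "(real \<Rightarrow> real \<Rightarrow> bool) \<Rightarrow> nat \<Rightarrow> real \<Rightarrow> real" where
  "fmap E m v = frac (v + gamma E m v)"

definition lift :: "real set \<Rightarrow> real set" where
  "lift V = {x + real_of_int k | x k. x \<in> V}"

definition closed_circ :: "real set \<Rightarrow> bool" where
  "closed_circ V \<longleftrightarrow> closed (lift V)"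

text \<open>Continuity of all gamma_m as functions on V with the topology of S^1.\<close>
definition continuous_graph :: "real set \<Rightarrow> (real \<Rightarrow> real \<Rightarrow> bool) \<Rightarrow> bool" where
  "continuous_graph V E \<longleftrightarrow> (\<forall>m. continuous_on (lift V) (\<lambda>x. gamma E m (frac x)))"

definition dcirc :: "real \<Rightarrow> real \<Rightarrow> real" where
  "dcirc x y = min (frac (x - y)) (frac (y - x))"

definition circ_lim :: "(nat \<Rightarrow> real) \<Rightarrow> real" where
  "circ_lim s = (THE y. 0 \<le> y \<and> y < 1 \<and> (\<lambda>m. dcirc (s m) y) \<longlonglongrightarrow> 0)"

definition vstar :: "(real \<Rightarrow> real \<Rightarrow> bool) \<Rightarrow> nat \<Rightarrow> real \<Rightarrow> real" where
  "vstar E q v = circ_lim (\<lambda>m. fmap E (m * q) v)"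

end

theory Submission
  imports Defs "HOL-Analysis.Analysis"
begin

text \<open>
  Lift the dynamics to the real line: \<open>gamma_lift E m x = x + gamma E m (frac x)\<close> commutes with
  integer translations, is monotone on the lift of \<open>V\<close> (by cyclicity a walk from a lower point can
  be pushed up to start at a higher one), maps the closed lift of \<open>V\<close> into itself, and by
  continuity satisfies \<open>gamma_lift E (a + b) = gamma_lift E b \<circ> gamma_lift E a\<close>.

  The winding fraction \<open>p / q\<close> forces \<open>min gamma_q \<le> p \<le> max gamma_q\<close>. A cyclic
  homomorphism from \<open>C\<^sub>n\<^sup>k\<close> yields walks winding \<open>k\<close> times in \<open>n\<close> steps, so
  \<open>k / n \<le> max gamma_q / q\<close>. Conversely, if \<open>gamma_q > p\<close> everywhere, then on a suitable finite
  subgraph the greedy walk (always jump to the farthest out-neighbour) becomes periodic and, read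
  along one turn, is a cyclic homomorphism with \<open>k / n > p / q\<close>.

  Hence \<open>H = gamma_lift E q - p\<close> moves some point up and some point down, so the iterates of
  the monotone degree-one map \<open>H\<close> converge to fixed points \<open>L\<close>, and \<open>v\<^sup>* = frac L\<close>. As
  \<open>gamma_lift E i\<close> commutes with \<open>H\<close>, both \<open>(f\<^sub>i v)\<^sup>*\<close> and \<open>f\<^sub>i (v\<^sup>*)\<close> equal
  \<open>frac (gamma_lift E i L)\<close>; this is \<open>frac L\<close> iff \<open>gamma_lift E i L = L + r\<close> with \<open>q r = i p\<close>,
  i.e. iff \<open>q\<close> divides \<open>i\<close>.
\<close>

section \<open>Clockwise distance on the circle\<close>

lemma dcw_nonneg: "0 \<le> dcw a b"
  by (simp add: dcw_def)

lemma dcw_less_one: "dcw a b < 1"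
  by (simp add: dcw_def frac_lt_1)

lemma dcw_self [simp]: "dcw a a = 0"
  by (simp add: dcw_def)

lemma dcw_frac_left: "dcw (frac x) u = frac (u - x)"
  by (simp add: dcw_def frac_diff_simp)

lemma dcw_frac_frac: "dcw (frac x) (frac y) = frac (y - x)"
  by (metis dcw_def dcw_frac_left diff_add_cancel diff_diff_eq2 frac_add_simps(1))

lemma dcw_frac_frac_eq: "0 \<le> y - x \<Longrightarrow> y - x < 1 \<Longrightarrow> dcw (frac x) (frac y) = y - x"
  by (simp add: dcw_frac_frac frac_eq)

lemma frac_add_dcw: "0 \<le> u \<Longrightarrow> u < 1 \<Longrightarrow> frac (x + dcw (frac x) u) = u"
  by (simp add: dcw_frac_left frac_eq)

lemma dcw_pos:
  assumes "a \<in> {0..<1}" "b \<in> {0..<1}" "a \<noteq> b"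
  shows "0 < dcw a b"
proof -
  have "frac (b - a) \<noteq> 0"
  proof
    assume "frac (b - a) = 0"
    then obtain k :: int where "b - a = of_int k"
      by (metis Ints_cases frac_eq_0_iff)
    moreover have "\<bar>b - a\<bar> < 1" using assms by auto
    ultimately show False using assms(3) by (simp flip: of_int_abs)
  qed
  then show ?thesis by (simp add: dcw_def order_le_neq_trans)
qed

lemma dcw_trans: "dcw a b + dcw b c < 1 \<Longrightarrow> dcw a c = dcw a b + dcw b c"
proof -
  assume sum: "dcw a b + dcw b c < 1"
  have "c - a = dcw a b + dcw b c + of_int (\<lfloor>b - a\<rfloor> + \<lfloor>c - b\<rfloor>)"
    by (simp add: dcw_def frac_def)
  then have "dcw a c = frac (dcw a b + dcw b c)"
    by (simp add: dcw_def)
  then show ?thesis using sum by (simp add: frac_eq dcw_nonneg)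
qed

lemma lift_iff: "V \<subseteq> {0..<1} \<Longrightarrow> x \<in> lift V \<longleftrightarrow> frac x \<in> V"
proof
  assume "V \<subseteq> {0..<1}" and "x \<in> lift V"
  then show "frac x \<in> V" by (auto simp: lift_def subset_iff)
next
  assume "frac x \<in> V"
  moreover have "x = frac x + of_int \<lfloor>x\<rfloor>" by (simp add: frac_def)
  ultimately show "x \<in> lift V" unfolding lift_def by blast
qed

lemma dcirc_le: "dcirc x y \<le> \<bar>x - y - of_int k\<bar>"
proof (cases "k \<le> \<lfloor>x - y\<rfloor>")
  case True
  then have "frac (x - y) \<le> x - y - of_int k" unfolding frac_def by linarith
  then show ?thesis unfolding dcirc_def by linarith
next
  case False
  have "frac (y - x) = of_int \<lceil>x - y\<rceil> - (x - y)"
    by (simp add: frac_def ceiling_def)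
  also have "\<dots> \<le> of_int k - (x - y)" using False ceiling_diff_floor_le_1[of "x - y"] by linarith
  finally show ?thesis unfolding dcirc_def by linarith
qed

lemma dcirc_attained: "\<exists>k::int. dcirc x y = \<bar>x - y - of_int k\<bar>"
proof (cases "frac (x - y) \<le> frac (y - x)")
  case True
  then have "dcirc x y = \<bar>x - y - of_int \<lfloor>x - y\<rfloor>\<bar>" unfolding dcirc_def frac_def by auto
  then show ?thesis by blast
next
  case False
  then have "dcirc x y = \<bar>x - y - of_int (- \<lfloor>y - x\<rfloor>)\<bar>" unfolding dcirc_def frac_def
    by (smt (verit) of_int_floor_le of_int_minus)
  then show ?thesis by blast
qed

lemma dcirc_nonneg: "0 \<le> dcirc x y"
  by (simp add: dcirc_def)

lemma dcirc_triangle: "dcirc y z \<le> dcirc s y + dcirc s z"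
proof -
  obtain k l where "dcirc s y = \<bar>s - y - of_int k\<bar>" "dcirc s z = \<bar>s - z - of_int l\<bar>"
    using dcirc_attained by metis
  moreover have "dcirc y z \<le> \<bar>y - z - of_int (l - k)\<bar>" by (rule dcirc_le)
  ultimately show ?thesis by simp
qed

lemma dcirc_frac_frac_le: "dcirc (frac a) (frac b) \<le> \<bar>a - b\<bar>"
  using dcirc_le[of "frac a" "frac b" "\<lfloor>b\<rfloor> - \<lfloor>a\<rfloor>"] by (simp add: frac_def)

lemma dcirc_le_0_imp_eq:
  assumes "x \<in> {0..<1}" "y \<in> {0..<1}" "dcirc x y \<le> 0"
  shows "x = y"
proof -
  obtain k :: int where "dcirc x y = \<bar>x - y - of_int k\<bar>" using dcirc_attained by blast
  then have k: "x - y = of_int k" using assms(3) dcirc_nonneg[of x y] by simp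
  have "\<bar>x - y\<bar> < 1" using assms by auto
  then have "k = 0" using k by (simp flip: of_int_abs)
  then show ?thesis using k by simp
qed

lemma circ_lim_frac:
  assumes "s \<longlonglongrightarrow> L"
  shows "circ_lim (\<lambda>m. frac (s m)) = frac L"
  unfolding circ_lim_def
proof (rule the_equality)
  have "(\<lambda>m. \<bar>s m - L\<bar>) \<longlonglongrightarrow> 0"
    using assms by (simp add: LIM_zero tendsto_rabs_zero)
  then have to_L: "(\<lambda>m. dcirc (frac (s m)) (frac L)) \<longlonglongrightarrow> 0"
    by (rule Lim_null_comparison[rotated]) (simp add: dcirc_nonneg dcirc_frac_frac_le)
  then show "0 \<le> frac L \<and> frac L < 1 \<and> (\<lambda>m. dcirc (frac (s m)) (frac L)) \<longlonglongrightarrow> 0"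
    by (simp add: frac_lt_1)
  fix y assume y: "0 \<le> y \<and> y < 1 \<and> (\<lambda>m. dcirc (frac (s m)) y) \<longlonglongrightarrow> 0"
  have "(\<lambda>m. dcirc (frac (s m)) y + dcirc (frac (s m)) (frac L)) \<longlonglongrightarrow> 0 + 0"
    using y to_L by (intro tendsto_add) auto
  then have "dcirc y (frac L) \<le> 0 + 0"
    by (rule LIMSEQ_le_const) (auto intro: dcirc_triangle)
  then show "y = frac L" using y by (intro dcirc_le_0_imp_eq) (auto simp: frac_lt_1)
qed

section \<open>Walks and maximal displacement\<close>

lemma sum_lessThan_add:
  "(\<Sum>i<a + b. f i) = (\<Sum>i<a. f i) + (\<Sum>i<b. f (a + i))" for f :: "nat \<Rightarrow> 'a::comm_monoid_add"
  by (induction b) (simp_all add: add.assoc)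

lemma sum_lessThan_mult_blocks:
  "(\<Sum>i<n * k. f i) = (\<Sum>j<n. \<Sum>t<k. f (j * k + t))" for f :: "nat \<Rightarrow> 'a::comm_monoid_add"
proof (induction n)
  case (Suc n)
  have "(\<Sum>i<Suc n * k. f i) = (\<Sum>i<n * k + k. f i)" by (simp add: add.commute)
  then show ?case using Suc by (simp only: sum_lessThan_add) simp
qed simp

lemma sum_periodic_block:
  fixes f :: "nat \<Rightarrow> 'a::comm_monoid_add"
  assumes "\<And>j. f (j + n) = f j"
  shows "(\<Sum>t<n. f (b * n + t)) = (\<Sum>t<n. f t)"
proof -
  have "f (b * n + t) = f t" for t
  proof (induction b)
    case (Suc b)
    then show ?case using assms[of "b * n + t"] by (simp add: algebra_simps)
  qed simp
  then show ?thesis by simp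
qed

lemma sum_periodic_shift:
  fixes f :: "nat \<Rightarrow> 'a::cancel_comm_monoid_add"
  assumes "\<And>j. f (j + n) = f j"
  shows "(\<Sum>t<n. f (a + t)) = (\<Sum>t<n. f t)"
proof (induction a)
  case (Suc a)
  have "(\<Sum>t<n. f (a + Suc t)) + f (a + 0) = (\<Sum>t<n. f (a + t)) + f (a + n)"
    using sum.lessThan_Suc_shift[of "\<lambda>t. f (a + t)" n] by (simp add: add.commute)
  then show ?case using Suc assms[of a] by (simp add: add.commute)
qed simp

definition walk :: "(real \<Rightarrow> real \<Rightarrow> bool) \<Rightarrow> nat \<Rightarrow> real \<Rightarrow> (nat \<Rightarrow> real) \<Rightarrow> bool" where
  "walk E m v w \<longleftrightarrow> w 0 = v \<and> (\<forall>i<m. w (Suc i) \<in> Nplus E (w i))"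

definition displacement :: "(nat \<Rightarrow> real) \<Rightarrow> nat \<Rightarrow> real" where
  "displacement w m = (\<Sum>i<m. dcw (w i) (w (Suc i)))"

lemma displacement_0 [simp]: "displacement w 0 = 0"
  by (simp add: displacement_def)

lemma displacement_Suc: "displacement w (Suc i) = displacement w i + dcw (w i) (w (Suc i))"
  by (simp add: displacement_def)

lemma displacement_add:
  "displacement w (a + b) = displacement w a + displacement (\<lambda>i. w (a + i)) b"
  by (simp add: displacement_def sum_lessThan_add)

lemma displacement_le: "displacement w m \<le> real m"
  using sum_mono[of "{..<m}" "\<lambda>i. dcw (w i) (w (Suc i))" "\<lambda>_. 1"]
  by (simp add: displacement_def dcw_less_one less_imp_le)

lemma displacement_mono: "i \<le> j \<Longrightarrow> displacement w i \<le> displacement w j"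
  by (induction j) (auto simp: displacement_Suc dcw_nonneg le_Suc_eq intro: add_increasing2)

lemma walk_const: "walk E m v (\<lambda>_. v)"
  by (simp add: walk_def Nplus_def)

lemma walk_split:
  assumes "walk E (a + b) v w"
  shows "walk E a v w" "walk E b (w a) (\<lambda>i. w (a + i))"
  using assms by (auto simp: walk_def)

lemma walk_append:
  assumes w1: "walk E a v w1" and w2: "walk E b (w1 a) w2"
  defines "w \<equiv> \<lambda>i. if i \<le> a then w1 i else w2 (i - a)"
  shows "walk E (a + b) v w" "displacement w (a + b) = displacement w1 a + displacement w2 b"
proof -
  have tail: "w (a + i) = w2 i" for i
    using w2 by (cases i) (auto simp: w_def walk_def)
  show "walk E (a + b) v w" unfolding walk_def
  proof (intro conjI allI impI)
    show "w 0 = v" using w1 by (simp add: w_def walk_def)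
    fix i assume i: "i < a + b"
    show "w (Suc i) \<in> Nplus E (w i)"
    proof (cases "i < a")
      case True then show ?thesis using w1 by (simp add: w_def walk_def)
    next
      case False
      then obtain j where "i = a + j" "j < b"
        using i le_Suc_ex by (metis add_less_cancel_left not_less)
      then show ?thesis using w2 tail[of j] tail[of "Suc j"] by (simp add: walk_def)
    qed
  qed
  have "displacement w a = displacement w1 a"
    unfolding displacement_def by (rule sum.cong) (simp_all add: w_def)
  then show "displacement w (a + b) = displacement w1 a + displacement w2 b"
    by (simp add: displacement_add tail)
qed

lemma gamma_eq_Sup: "gamma E m v = Sup {displacement w m | w. walk E m v w}"
proof (cases "m = 0")
  case True
  then have "{displacement w m | w. walk E m v w} = {0}" using walk_const by auto
  then show ?thesis using True by (simp add: gamma_def)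
qed (simp add: gamma_def walk_def displacement_def)

lemma gamma_ge_displacement: "walk E m v w \<Longrightarrow> displacement w m \<le> gamma E m v"
  unfolding gamma_eq_Sup using displacement_le by (intro cSup_upper bdd_aboveI) auto

lemma gamma_nonneg: "0 \<le> gamma E m v"
  using gamma_ge_displacement[OF walk_const[of E m v]] by (simp add: displacement_def)

lemma gamma_least: "(\<And>w. walk E m v w \<Longrightarrow> displacement w m \<le> B) \<Longrightarrow> gamma E m v \<le> B"
  unfolding gamma_eq_Sup using walk_const[of E m v] by (intro cSup_least) auto

lemma gamma_approx:
  assumes "e > 0"
  obtains w where "walk E m v w" "gamma E m v - e < displacement w m"
proof -
  have "gamma E m v - e < Sup {displacement w m | w. walk E m v w}"
    using assms by (simp add: gamma_eq_Sup)
  then show ?thesis using that less_cSupD[of "{displacement w m | w. walk E m v w}"] walk_const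
    by blast
qed

lemma gamma_0 [simp]: "gamma E 0 v = 0"
  by (simp add: gamma_def)

section \<open>The lifted displacement map\<close>

definition gamma_lift :: "(real \<Rightarrow> real \<Rightarrow> bool) \<Rightarrow> nat \<Rightarrow> real \<Rightarrow> real" where
  "gamma_lift E m x = x + gamma E m (frac x)"

lemma gamma_lift_0 [simp]: "gamma_lift E 0 x = x"
  by (simp add: gamma_lift_def)

lemma gamma_lift_add_of_int: "gamma_lift E m (x + of_int k) = gamma_lift E m x + of_int k"
  by (simp add: gamma_lift_def)

lemma funpow_add_of_int:
  fixes f :: "real \<Rightarrow> real"
  assumes "\<And>x k. f (x + of_int k) = f x + of_int k"
  shows "(f ^^ m) (x + of_int k) = (f ^^ m) x + of_int k"
  by (induction m) (simp_all add: assms)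

lemma funpow_translation_point:
  fixes f :: "real \<Rightarrow> real"
  assumes "\<And>x k. f (x + of_int k) = f x + of_int k" and "f L = L + of_int c"
  shows "(f ^^ j) L = L + of_int (int j * c)"
proof (induction j)
  case (Suc j)
  have "(f ^^ Suc j) L = f L + of_int (int j * c)" using Suc assms(1)[of L "int j * c"] by simp
  then show ?case using assms(2) by (simp add: algebra_simps)
qed simp

lemma frac_diff_of_nat [simp]: "frac (x - real n) = frac x"
  using frac_add_of_int_right[of x "- int n"] by simp

lemma fmap_frac_eq: "fmap E m (frac x) = frac (gamma_lift E m x)"
  by (simp add: fmap_def gamma_lift_def)

locale cyclic_digraph =
  fixes V :: "real set" and E :: "real \<Rightarrow> real \<Rightarrow> bool"
  assumes cyclic: "cyclic_graph V E"
begin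

lemma V_subset: "V \<subseteq> {0..<1}"
  using cyclic unfolding cyclic_graph_def digraph_on_def by blast

lemma frac_vertex [simp]: "v \<in> V \<Longrightarrow> frac v = v"
  using V_subset by auto

lemma edge_in_V: "E a b \<Longrightarrow> a \<in> V \<and> b \<in> V"
  using cyclic unfolding cyclic_graph_def digraph_on_def by blast

lemma no_loop: "\<not> E a a"
  using cyclic unfolding cyclic_graph_def digraph_on_def by blast

lemma no_opposite_edges: "E a b \<Longrightarrow> \<not> E b a"
  using cyclic unfolding cyclic_graph_def digraph_on_def by blast

lemma cyclic_edges: "E v u \<Longrightarrow> w \<in> V \<Longrightarrow> cbetween v w u \<Longrightarrow> E v w \<and> E w u"
  using cyclic unfolding cyclic_graph_def by blast

lemma mem_lift_iff: "x \<in> lift V \<longleftrightarrow> frac x \<in> V"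
  using lift_iff[OF V_subset] .

lemma Nplus_in_V: "a \<in> V \<Longrightarrow> u \<in> Nplus E a \<Longrightarrow> u \<in> V"
  using edge_in_V by (auto simp: Nplus_def)

lemma walk_in_V: "walk E m v w \<Longrightarrow> v \<in> V \<Longrightarrow> i \<le> m \<Longrightarrow> w i \<in> V"
  by (induction i) (auto simp: walk_def intro: Nplus_in_V)

lemma frac_add_displacement:
  assumes "walk E m (frac X) w" "frac X \<in> V" "i \<le> m"
  shows "frac (X + displacement w i) = w i"
  using assms(3)
proof (induction i)
  case (Suc i)
  have "w (Suc i) \<in> V" using walk_in_V assms Suc.prems by blast
  then show ?case
    using Suc frac_add_dcw[of "w (Suc i)" "X + displacement w i"] V_subset
    by (auto simp: displacement_Suc add.assoc)
qed (use assms in \<open>simp add: walk_def\<close>)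

text \<open>A step from a lifted vertex \<open>X\<close> can be replayed from any higher lifted vertex \<open>Y\<close>:
  if the target lies beyond \<open>Y\<close>, then \<open>frac Y\<close> lies between \<open>frac X\<close> and the target, so by
  cyclicity the target is also a neighbour of \<open>frac Y\<close>; otherwise one stays at \<open>Y\<close>.\<close>

lemma step_push:
  assumes X: "frac X \<in> V" and u: "u \<in> Nplus E (frac X)" and Y: "frac Y \<in> V" and XY: "X \<le> Y"
  defines "U \<equiv> X + dcw (frac X) u"
  shows "frac (max Y U) \<in> Nplus E (frac Y) \<and> Y + dcw (frac Y) (frac (max Y U)) = max Y U"
proof (cases "U \<le> Y")
  case True
  then show ?thesis by (simp add: max_absorb1 Nplus_def)
next
  case False
  have uV: "u \<in> V" using Nplus_in_V X u by blast
  have fU: "frac U = u" unfolding U_def using uV V_subset by (intro frac_add_dcw) auto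
  have U_less: "U - X < 1" unfolding U_def using dcw_less_one by simp
  have "u \<in> Nplus E (frac Y)"
  proof (cases "X = Y")
    case False
    then have "u \<noteq> frac X" using \<open>\<not> U \<le> Y\<close> XY by (auto simp: U_def)
    then have "E (frac X) u" using u by (simp add: Nplus_def)
    moreover have "cbetween (frac X) (frac Y) u"
    proof -
      have "dcw (frac X) (frac Y) = Y - X"
        using \<open>\<not> U \<le> Y\<close> U_less XY by (intro dcw_frac_frac_eq) auto
      then show ?thesis using \<open>\<not> U \<le> Y\<close> XY False unfolding cbetween_def U_def by simp
    qed
    ultimately show ?thesis using cyclic_edges[of "frac X" u "frac Y"] Y by (simp add: Nplus_def)
  qed (use u in simp)
  moreover have "dcw (frac Y) (frac U) = U - Y"
    using False U_less XY by (intro dcw_frac_frac_eq) auto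
  ultimately show ?thesis using False fU by (simp add: max_def)
qed

lemma walk_push:
  assumes w: "walk E m (frac X) w" and X: "frac X \<in> V" and Y: "frac Y \<in> V" and XY: "X \<le> Y"
  obtains w' where "walk E m (frac Y) w'" "Y + displacement w' m = max Y (X + displacement w m)"
    "\<And>i. i \<le> m \<Longrightarrow> w' i = frac Y \<or> w' i = w i"
proof -
  define P where "P i = max Y (X + displacement w i)" for i
  define w' where "w' i = frac (P i)" for i
  have fpos: "i \<le> m \<Longrightarrow> frac (X + displacement w i) = w i" for i
    using frac_add_displacement w X by blast
  have PV: "i \<le> m \<Longrightarrow> frac (P i) \<in> V" for i
    using fpos walk_in_V[OF w X] Y unfolding P_def max_def by auto
  have step: "w' (Suc i) \<in> Nplus E (w' i) \<and> P i + dcw (w' i) (w' (Suc i)) = P (Suc i)"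
    if i: "i < m" for i
  proof -
    have "frac (X + displacement w i) \<in> V" "w (Suc i) \<in> Nplus E (frac (X + displacement w i))"
      using fpos walk_in_V[OF w X] i w by (auto simp: walk_def)
    from step_push[OF this PV[of i]] i
    have "frac (max (P i) (X + displacement w (Suc i))) \<in> Nplus E (w' i) \<and>
        P i + dcw (w' i) (frac (max (P i) (X + displacement w (Suc i))))
        = max (P i) (X + displacement w (Suc i))"
      using fpos[of i] by (simp add: w'_def P_def displacement_Suc add.assoc)
    moreover have "max (P i) (X + displacement w (Suc i)) = P (Suc i)"
      unfolding P_def using displacement_mono[of i "Suc i" w] by (simp add: max_def)
    ultimately show ?thesis by (simp add: w'_def)
  qed
  have "walk E m (frac Y) w'"
    using step XY by (auto simp: walk_def w'_def P_def max_def)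
  moreover have "displacement w' m = P m - P 0"
  proof -
    have "displacement w' m = (\<Sum>i<m. P (Suc i) - P i)"
      unfolding displacement_def by (rule sum.cong) (use step in \<open>auto simp: algebra_simps\<close>)
    then show ?thesis by (simp add: sum_lessThan_telescope)
  qed
  moreover have "P 0 = Y" unfolding P_def using XY by simp
  moreover have "\<And>i. i \<le> m \<Longrightarrow> w' i = frac Y \<or> w' i = w i"
    unfolding w'_def P_def using fpos by (auto simp: max_def)
  ultimately show ?thesis using that unfolding P_def by simp
qed

lemma gamma_lift_mono:
  assumes X: "frac X \<in> V" and Y: "frac Y \<in> V" and XY: "X \<le> Y"
  shows "gamma_lift E m X \<le> gamma_lift E m Y"
proof -
  have "gamma E m (frac X) \<le> gamma_lift E m Y - X"
  proof (rule gamma_least)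
    fix w assume w: "walk E m (frac X) w"
    obtain w' where "walk E m (frac Y) w'" "Y + displacement w' m = max Y (X + displacement w m)"
      using walk_push[OF w X Y XY] by blast
    then show "displacement w m \<le> gamma_lift E m Y - X"
      using gamma_ge_displacement[of E m "frac Y" w']
      by (simp add: gamma_lift_def max_def split: if_splits)
  qed
  then show ?thesis unfolding gamma_lift_def by simp
qed

end

locale closed_continuous_cyclic = cyclic_digraph +
  assumes closed_V: "closed_circ V" and continuous_E: "continuous_graph V E"
begin

lemma closed_lift: "closed (lift V)"
  using closed_V by (simp add: closed_circ_def)

lemma continuous_on_gamma_lift: "continuous_on (lift V) (gamma_lift E m)"
  using continuous_E unfolding continuous_graph_def gamma_lift_def[abs_def]
  by (intro continuous_on_add continuous_on_id) blast

text \<open>\<open>gamma_lift E m X\<close> is approximated by endpoints of walks, which lie in the closed set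
  \<open>lift V\<close>.\<close>

lemma gamma_lift_in_lift: "X \<in> lift V \<Longrightarrow> gamma_lift E m X \<in> lift V"
proof -
  assume X: "X \<in> lift V"
  have "\<exists>y\<in>lift V. dist y (gamma_lift E m X) < e" if e: "e > 0" for e
  proof -
    obtain w where w: "walk E m (frac X) w" "gamma E m (frac X) - e < displacement w m"
      using gamma_approx[OF e] by blast
    have "X + displacement w m \<in> lift V"
      using frac_add_displacement[OF w(1)] walk_in_V[OF w(1)] X by (simp add: mem_lift_iff)
    moreover have "dist (X + displacement w m) (gamma_lift E m X) < e"
      using w gamma_ge_displacement[OF w(1)] by (simp add: gamma_lift_def dist_real_def)
    ultimately show ?thesis by blast
  qed
  then show ?thesis using closed_approachable[OF closed_lift] by blast
qed

lemma gamma_lift_add_le: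
  assumes X: "X \<in> lift V"
  shows "gamma_lift E (a + b) X \<le> gamma_lift E b (gamma_lift E a X)"
proof -
  have XV: "frac X \<in> V" using X by (simp add: mem_lift_iff)
  have "gamma E (a + b) (frac X) \<le> gamma_lift E b (gamma_lift E a X) - X"
  proof (rule gamma_least)
    fix w assume w: "walk E (a + b) (frac X) w"
    define Q where "Q = X + displacement w a"
    have fQ: "frac Q = w a" and QV: "Q \<in> lift V"
      using frac_add_displacement[OF walk_split(1)[OF w] XV] walk_in_V[OF walk_split(1)[OF w] XV]
      by (simp_all add: Q_def mem_lift_iff)
    have "X + displacement w (a + b) \<le> gamma_lift E b Q"
      using gamma_ge_displacement[OF walk_split(2)[OF w]] fQ
      by (simp add: gamma_lift_def Q_def displacement_add)
    also have "\<dots> \<le> gamma_lift E b (gamma_lift E a X)"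
    proof (rule gamma_lift_mono)
      show "Q \<le> gamma_lift E a X"
        using gamma_ge_displacement[OF walk_split(1)[OF w]] by (simp add: Q_def gamma_lift_def)
    qed (use QV gamma_lift_in_lift[OF X] in \<open>simp_all add: mem_lift_iff\<close>)
    finally show "displacement w (a + b) \<le> gamma_lift E b (gamma_lift E a X) - X" by simp
  qed
  then show ?thesis by (simp add: gamma_lift_def[of E "a + b"])
qed

text \<open>Appending to an almost optimal walk of length \<open>a\<close> only reaches points near
  \<open>gamma_lift E a X\<close>; continuity of \<open>gamma_lift E b\<close> controls the loss.\<close>

lemma gamma_lift_add_ge:
  assumes X: "X \<in> lift V"
  shows "gamma_lift E b (gamma_lift E a X) \<le> gamma_lift E (a + b) X"
proof (rule field_le_epsilon)
  define T where "T = gamma_lift E a X"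
  have XV: "frac X \<in> V" using X by (simp add: mem_lift_iff)
  have TV: "T \<in> lift V" using gamma_lift_in_lift[OF X] by (simp add: T_def)
  fix e :: real assume e: "e > 0"
  obtain d where d: "d > 0"
    "\<And>x. x \<in> lift V \<Longrightarrow> dist x T < d \<Longrightarrow> dist (gamma_lift E b x) (gamma_lift E b T) < e"
    using continuous_on_gamma_lift[of b] TV e unfolding continuous_on_iff by metis
  obtain w1 where w1: "walk E a (frac X) w1" "gamma E a (frac X) - d < displacement w1 a"
    using gamma_approx[OF d(1)] by blast
  define Q where "Q = X + displacement w1 a"
  have fQ: "frac Q = w1 a" and QV: "Q \<in> lift V"
    using frac_add_displacement[OF w1(1) XV] walk_in_V[OF w1(1) XV]
    by (simp_all add: Q_def mem_lift_iff)
  have "dist Q T < d"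
    using w1 gamma_ge_displacement[OF w1(1)] by (simp add: Q_def T_def gamma_lift_def dist_real_def)
  then have close: "gamma_lift E b T < gamma_lift E b Q + e"
    using d(2)[OF QV] by (simp add: dist_real_def)
  have "gamma E b (w1 a) \<le> gamma E (a + b) (frac X) - displacement w1 a"
  proof (rule gamma_least)
    fix w2 assume w2: "walk E b (w1 a) w2"
    show "displacement w2 b \<le> gamma E (a + b) (frac X) - displacement w1 a"
      using gamma_ge_displacement[OF walk_append(1)[OF w1(1) w2]] walk_append(2)[OF w1(1) w2]
      by simp
  qed
  then have "gamma_lift E b Q \<le> gamma_lift E (a + b) X"
    using fQ by (simp add: gamma_lift_def Q_def)
  then show "gamma_lift E b (gamma_lift E a X) \<le> gamma_lift E (a + b) X + e"
    using close by (simp add: T_def)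
qed

lemma gamma_lift_add:
  "X \<in> lift V \<Longrightarrow> gamma_lift E (a + b) X = gamma_lift E b (gamma_lift E a X)"
  using gamma_lift_add_le gamma_lift_add_ge by (simp add: order_antisym)

lemma gamma_lift_mult:
  "X \<in> lift V \<Longrightarrow> gamma_lift E (j * m) X = (gamma_lift E m ^^ j) X"
proof (induction j)
  case (Suc j)
  have "gamma_lift E (Suc j * m) X = gamma_lift E m (gamma_lift E (j * m) X)"
    using gamma_lift_add[OF Suc.prems, of "j * m" m] by (simp add: add.commute)
  then show ?case using Suc by simp
qed simp

lemma gamma_lift_commute:
  "X \<in> lift V \<Longrightarrow> gamma_lift E i (gamma_lift E j X) = gamma_lift E j (gamma_lift E i X)"
  using gamma_lift_add[of X j i] gamma_lift_add[of X i j] by (simp add: add.commute)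

end

section \<open>Rotation dynamics of the lifted map\<close>

lemma monoseq_funpow:
  fixes F :: "'a::linorder \<Rightarrow> 'a"
  assumes F_S: "\<And>x. x \<in> S \<Longrightarrow> F x \<in> S"
    and F_mono: "\<And>x y. x \<in> S \<Longrightarrow> y \<in> S \<Longrightarrow> x \<le> y \<Longrightarrow> F x \<le> F y" and x: "x \<in> S"
  shows "monoseq (\<lambda>j. (F ^^ j) x)"
proof -
  have iter_S: "(F ^^ j) x \<in> S" for j
    by (induction j) (simp_all add: x F_S)
  show ?thesis
  proof (cases "x \<le> F x")
    case True
    have "(F ^^ j) x \<le> (F ^^ Suc j) x" for j
    proof (induction j)
      case (Suc j)
      show ?case using F_mono[OF iter_S iter_S Suc.IH] by simp
    qed (use True in simp)
    then show ?thesis by (simp add: monoseq_Suc)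
  next
    case False
    have "(F ^^ Suc j) x \<le> (F ^^ j) x" for j
    proof (induction j)
      case (Suc j)
      show ?case using F_mono[OF iter_S iter_S Suc.IH] by simp
    qed (use False in simp)
    then show ?thesis by (simp add: monoseq_Suc)
  qed
qed

lemma limit_of_funpow_fixed:
  fixes F :: "'a::metric_space \<Rightarrow> 'a"
  assumes "closed S" "continuous_on S F" "\<And>x. x \<in> S \<Longrightarrow> F x \<in> S" "x \<in> S"
    and lim: "(\<lambda>j. (F ^^ j) x) \<longlonglongrightarrow> L"
  shows "L \<in> S" "F L = L"
proof -
  have iter_S: "(F ^^ j) x \<in> S" for j
    by (induction j) (simp_all add: assms(3,4))
  show L: "L \<in> S" using closed_sequentially[OF assms(1) _ lim] iter_S by blast
  have "(\<lambda>j. F ((F ^^ j) x)) \<longlonglongrightarrow> F L"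
    using continuous_on_tendsto_compose[OF assms(2) lim L] iter_S by simp
  moreover have "(\<lambda>j. F ((F ^^ j) x)) \<longlonglongrightarrow> L"
    using LIMSEQ_Suc[OF lim] by simp
  ultimately show "F L = L" by (rule LIMSEQ_unique)
qed

text \<open>Iterates of a monotone degree-one map are trapped between integer translates of a point
  moved up and a point moved down.\<close>

lemma degree_one_iterates_converge:
  fixes F :: "real \<Rightarrow> real" and S :: "real set"
  assumes S_closed: "closed S" and S_shift: "\<And>x k. x \<in> S \<Longrightarrow> x + of_int k \<in> S"
    and F_S: "\<And>x. x \<in> S \<Longrightarrow> F x \<in> S" and F_cont: "continuous_on S F"
    and F_mono: "\<And>x y. x \<in> S \<Longrightarrow> y \<in> S \<Longrightarrow> x \<le> y \<Longrightarrow> F x \<le> F y"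
    and F_shift: "\<And>x k. F (x + of_int k) = F x + of_int k"
    and a: "a \<in> S" "a \<le> F a" and b: "b \<in> S" "F b \<le> b" and x: "x \<in> S"
  obtains L where "L \<in> S" "F L = L" "(\<lambda>j. (F ^^ j) x) \<longlonglongrightarrow> L"
proof -
  have iter_S: "(F ^^ j) x \<in> S" for j
    by (induction j) (simp_all add: x F_S)
  define A where "A = a + of_int \<lfloor>x - a\<rfloor>"
  define B where "B = b + of_int \<lceil>x - b\<rceil>"
  have A: "A \<in> S" "A \<le> F A" "A \<le> x" and B: "B \<in> S" "F B \<le> B" "x \<le> B"
    using a b S_shift F_shift by (auto simp: A_def B_def) linarith+
  have bounds: "A \<le> (F ^^ j) x \<and> (F ^^ j) x \<le> B" for j
  proof (induction j)
    case (Suc j)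
    then have "F A \<le> F ((F ^^ j) x) \<and> F ((F ^^ j) x) \<le> F B"
      using A B iter_S F_mono by blast
    then show ?case using A B by simp
  qed (use A B in simp)
  have "Bseq (\<lambda>j. (F ^^ j) x)"
  proof (rule BseqI')
    show "norm ((F ^^ j) x) \<le> \<bar>A\<bar> + \<bar>B\<bar>" for j using bounds[of j] by auto
  qed
  then have "convergent (\<lambda>j. (F ^^ j) x)"
    using Bseq_monoseq_convergent monoseq_funpow[where F = F and S = S, OF F_S F_mono x] by blast
  then obtain L where lim: "(\<lambda>j. (F ^^ j) x) \<longlonglongrightarrow> L"
    by (auto simp: convergent_def)
  show ?thesis by (rule that[OF limit_of_funpow_fixed[OF S_closed F_cont F_S x lim] lim])
qed

context closed_continuous_cyclic
begin

lemma rotation_limit: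
  assumes a: "a \<in> V" "real p \<le> gamma E q a" and b: "b \<in> V" "gamma E q b \<le> real p"
    and X: "X \<in> lift V"
  obtains L where "L \<in> lift V" "gamma_lift E q L = L + real p"
    "(\<lambda>j. gamma_lift E (j * q) X - real j * real p) \<longlonglongrightarrow> L"
proof -
  define F where "F x = gamma_lift E q x - real p" for x
  have F_shift: "F (x + of_int k) = F x + of_int k" for x k
    by (simp add: F_def gamma_lift_add_of_int)
  have F_iter: "(F ^^ j) x = gamma_lift E (j * q) x - real j * real p" if "x \<in> lift V" for x j
  proof (induction j)
    case (Suc j)
    have "(F ^^ Suc j) x = F (gamma_lift E (j * q) x - real j * real p)"
      using Suc by simp
    also have "\<dots> = gamma_lift E q (gamma_lift E (j * q) x - real j * real p) - real p"
      by (simp add: F_def)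
    also have "\<dots> = gamma_lift E q (gamma_lift E (j * q) x) - real (Suc j) * real p"
      using gamma_lift_add_of_int[of E q "gamma_lift E (j * q) x" "- int (j * p)"]
      by (simp add: algebra_simps)
    also have "gamma_lift E q (gamma_lift E (j * q) x) = gamma_lift E (Suc j * q) x"
      using gamma_lift_add[OF that, of "j * q" q] by (simp add: add.commute)
    finally show ?case .
  qed simp
  obtain L where "L \<in> lift V" "F L = L" "(\<lambda>j. (F ^^ j) X) \<longlonglongrightarrow> L"
  proof (rule degree_one_iterates_converge[where S = "lift V" and F = F and a = a and b = b])
    show "x \<in> lift V \<Longrightarrow> x + of_int k \<in> lift V" for x k by (simp add: mem_lift_iff)
    show "x \<in> lift V \<Longrightarrow> F x \<in> lift V" for x
      using gamma_lift_in_lift[of x q] mem_lift_iff by (simp add: F_def)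
    show "continuous_on (lift V) F"
      unfolding F_def[abs_def] by (intro continuous_intros continuous_on_gamma_lift)
    show "x \<in> lift V \<Longrightarrow> y \<in> lift V \<Longrightarrow> x \<le> y \<Longrightarrow> F x \<le> F y" for x y
      using gamma_lift_mono by (simp add: F_def mem_lift_iff)
  qed (use closed_lift F_shift a b X in \<open>auto simp: F_def gamma_lift_def mem_lift_iff\<close>)
  then show ?thesis using that F_iter[OF X] by (simp add: F_def)
qed

lemma vstar_frac_eq:
  assumes "X \<in> lift V" "(\<lambda>j. gamma_lift E (j * q) X - real j * real p) \<longlonglongrightarrow> L"
  shows "vstar E q (frac X) = frac L"
proof -
  have "fmap E (j * q) (frac X) = frac (gamma_lift E (j * q) X - real j * real p)" for j
    using fmap_frac_eq[of E "j * q" X] frac_diff_of_nat[of _ "j * p"] by simp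
  then show ?thesis using circ_lim_frac[OF assms(2)] by (simp add: vstar_def)
qed

lemma vstar_fmap:
  assumes X: "X \<in> lift V" and lim: "(\<lambda>j. gamma_lift E (j * q) X - real j * real p) \<longlonglongrightarrow> L"
    and L: "L \<in> lift V"
  shows "vstar E q (fmap E i (frac X)) = frac (gamma_lift E i L)"
proof -
  define Y where "Y = gamma_lift E i X"
  have Y: "Y \<in> lift V" using gamma_lift_in_lift[OF X] by (simp add: Y_def)
  have commute: "gamma_lift E (j * q) Y - real j * real p
      = gamma_lift E i (gamma_lift E (j * q) X - real j * real p)" for j
    using gamma_lift_commute[OF X, of "j * q" i]
      gamma_lift_add_of_int[of E i "gamma_lift E (j * q) X" "- int (j * p)"]
    by (simp add: Y_def)
  have "(\<lambda>j. gamma_lift E i (gamma_lift E (j * q) X - real j * real p)) \<longlonglongrightarrow> gamma_lift E i L"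
  proof (rule continuous_on_tendsto_compose[OF continuous_on_gamma_lift lim L])
    show "\<forall>\<^sub>F j in sequentially. gamma_lift E (j * q) X - real j * real p \<in> lift V"
      using gamma_lift_in_lift[OF X] mem_lift_iff frac_diff_of_nat[of _ "j * p" for j] by simp
  qed
  then have "(\<lambda>j. gamma_lift E (j * q) Y - real j * real p) \<longlonglongrightarrow> gamma_lift E i L"
    by (simp only: commute)
  then have "vstar E q (frac Y) = frac (gamma_lift E i L)"
    by (rule vstar_frac_eq[OF Y])
  then show ?thesis by (simp add: Y_def fmap_frac_eq)
qed

text \<open>Iterating \<open>gamma_lift E q L = L + p\<close> gives \<open>gamma_lift E (i * q) L = L + i p\<close>; if also
  \<open>gamma_lift E i L = L + r\<close>, iterating that gives \<open>L + q r\<close> for the same point, so \<open>q r = i p\<close>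
  and coprimality yields \<open>q dvd i\<close>.\<close>

lemma frac_gamma_lift_eq_iff_dvd:
  assumes L: "L \<in> lift V" and rot: "gamma_lift E q L = L + real p" and cop: "coprime p q"
  shows "frac (gamma_lift E i L) = frac L \<longleftrightarrow> q dvd i"
proof -
  have iter_q: "gamma_lift E (j * q) L = L + of_int (int j * int p)" for j
    using gamma_lift_mult[OF L] funpow_translation_point[of "gamma_lift E q" L "int p"]
      gamma_lift_add_of_int rot by simp
  show ?thesis
  proof
    assume "frac (gamma_lift E i L) = frac L"
    then obtain r where r: "gamma_lift E i L = L + of_int r" by (elim frac_eqE)
    have "gamma_lift E (q * i) L = L + of_int (int q * r)"
      using gamma_lift_mult[OF L] funpow_translation_point[of "gamma_lift E i" L r]
        gamma_lift_add_of_int r by simp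
    then have "(of_int (int q * r) :: real) = of_int (int i * int p)"
      using iter_q[of i] by (simp add: mult.commute)
    then have "int q * r = int i * int p" by (simp only: of_int_eq_iff)
    then have "q dvd i * p" by (metis dvd_triv_left of_nat_dvd_iff of_nat_mult)
    then show "q dvd i" using cop by (simp add: coprime_dvd_mult_left_iff coprime_commute)
  next
    assume "q dvd i"
    then obtain j where "i = j * q" by (metis dvd_def mult.commute)
    then show "frac (gamma_lift E i L) = frac L" using iter_q[of j] by (metis frac_add_of_int_right)
  qed
qed

end

section \<open>Winding fraction bounded by the maximal displacement\<close>

lemma cyc_hom_ratio_less_half: "cyc_hom n k E h \<Longrightarrow> real k / real n < 1 / 2"
  by (auto simp: cyc_hom_def field_simps)

lemma cyc_hom_mono: "cyc_hom n k E' h \<Longrightarrow> (\<And>a b. E' a b \<Longrightarrow> E a b) \<Longrightarrow> cyc_hom n k E h"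
  by (auto simp: cyc_hom_def)

lemma cyc_hom_le_wf_fin:
  assumes "cyc_hom n k E h"
  shows "real k / real n \<le> wf_fin E"
proof -
  let ?S = "{real k / real n | k n. \<exists>h. cyc_hom n k E h}"
  have "real k / real n \<in> ?S" using assms by blast
  moreover have "bdd_above ?S"
    using cyc_hom_ratio_less_half by (fastforce intro: bdd_aboveI[where M = "1 / 2"])
  ultimately show ?thesis unfolding wf_fin_def Let_def by (auto intro: cSup_upper)
qed

lemma wf_fin_le:
  assumes "\<And>n k h. cyc_hom n k E h \<Longrightarrow> real k / real n \<le> B" and "0 \<le> B"
  shows "wf_fin E \<le> B"
  using assms unfolding wf_fin_def Let_def by (auto intro!: cSup_least)

lemma wf_fin_induced_le_wf: "W \<subseteq> V \<Longrightarrow> finite W \<Longrightarrow> wf_fin (induced E W) \<le> wf V E"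
  unfolding wf_def using wf_fin_le[OF less_imp_le[OF cyc_hom_ratio_less_half]]
  by (intro cSup_upper bdd_aboveI[where M = "1 / 2"]) auto

lemma wf_le:
  assumes "\<And>W. W \<subseteq> V \<Longrightarrow> finite W \<Longrightarrow> wf_fin (induced E W) \<le> B"
  shows "wf V E \<le> B"
  unfolding wf_def using assms by (intro cSup_least) auto

definition cyc_gap :: "(nat \<Rightarrow> real) \<Rightarrow> nat \<Rightarrow> nat \<Rightarrow> real" where
  "cyc_gap h n i = dcw (h (i mod n)) (h (Suc i mod n))"

lemma cyc_gap_periodic: "cyc_gap h n (i + n) = cyc_gap h n i"
  by (simp add: cyc_gap_def mod_add_self2 flip: add_Suc)

lemma cyc_gap_sum:
  assumes "cyc_hom n k E h"
  shows "(\<Sum>t<n. cyc_gap h n (a + t)) = 1"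
proof -
  have "(\<Sum>t<n. cyc_gap h n t) = (\<Sum>i<n. dcw (h i) (h ((i + 1) mod n)))"
    unfolding cyc_gap_def by (rule sum.cong) auto
  then show ?thesis
    using assms sum_periodic_shift[of "cyc_gap h n" n, OF cyc_gap_periodic]
    by (simp add: cyc_hom_def)
qed

context cyclic_digraph
begin

lemma cyc_hom_edge:
  assumes "cyc_hom n k E h" "1 \<le> s" "s \<le> k"
  shows "E (h (a mod n)) (h ((a + s) mod n))"
proof -
  have "0 < n" using assms(1) by (simp add: cyc_hom_def)
  then have "E (h (a mod n)) (h ((a mod n + s) mod n))"
    using assms unfolding cyc_hom_def by simp
  then show ?thesis by (simp add: mod_add_left_eq)
qed

lemma cyc_gap_pos:
  assumes "cyc_hom n k E h"
  shows "0 < cyc_gap h n i"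
proof -
  have e: "E (h (i mod n)) (h (Suc i mod n))"
    using cyc_hom_edge[OF assms, of 1 i] assms by (simp add: cyc_hom_def)
  moreover have "h (i mod n) \<noteq> h (Suc i mod n)" using e no_loop by metis
  ultimately show ?thesis
    unfolding cyc_gap_def using edge_in_V[OF e] V_subset by (intro dcw_pos) auto
qed

text \<open>Up to \<open>k\<close> consecutive gaps sum to less than a full turn, so they add up to the clockwise
  distance spanned.\<close>

lemma cyc_hom_dcw_eq_gap_sum:
  assumes h: "cyc_hom n k E h" and "s \<le> k"
  shows "dcw (h (a mod n)) (h ((a + s) mod n)) = (\<Sum>t<s. cyc_gap h n (a + t))"
  using assms(2)
proof (induction s)
  case (Suc s)
  have "(\<Sum>t<Suc s. cyc_gap h n (a + t)) < 1"
  proof -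
    obtain r where r: "n = Suc s + r" "0 < r"
      using Suc.prems h by (auto simp: cyc_hom_def intro: that[of "n - Suc s"])
    have "(\<Sum>t<n. cyc_gap h n (a + t))
        = (\<Sum>t<Suc s. cyc_gap h n (a + t)) + (\<Sum>t<r. cyc_gap h n (a + (Suc s + t)))"
      using sum_lessThan_add[of "\<lambda>t. cyc_gap h n (a + t)" "Suc s" r] unfolding r(1)[symmetric] .
    moreover have "0 < (\<Sum>t<r. cyc_gap h n (a + (Suc s + t)))"
      using r(2) by (intro sum_pos cyc_gap_pos[OF h]) auto
    ultimately show ?thesis using cyc_gap_sum[OF h] by simp
  qed
  then show ?case
    using Suc dcw_trans[of "h (a mod n)" "h ((a + s) mod n)" "h ((a + Suc s) mod n)"]
    by (simp add: cyc_gap_def)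
qed simp

text \<open>Jumping \<open>k\<close> steps at a time, \<open>n\<close> jumps wind \<open>k\<close> times around the circle; grouping
  \<open>q n\<close> jumps into walks of length \<open>q\<close> bounds this by \<open>n\<close> times the bound on \<open>gamma E q\<close>.\<close>

lemma cyc_hom_gamma_bound:
  assumes h: "cyc_hom n k E h" and bound: "\<And>y. y \<in> V \<Longrightarrow> gamma E q y \<le> M"
  shows "real q * real k \<le> real n * M"
proof -
  have n0: "0 < n" using h by (simp add: cyc_hom_def)
  define w where "w j = h ((j * k) mod n)" for j
  define f where "f j = dcw (w j) (w (Suc j))" for j
  have wstep: "w (Suc j) \<in> Nplus E (w j)" and wV: "w j \<in> V" for j
    using cyc_hom_edge[OF h, of k "j * k"] h edge_in_V
    by (auto simp: w_def Nplus_def cyc_hom_def add.commute)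
  have f_gaps: "f j = (\<Sum>t<k. cyc_gap h n (j * k + t))" for j
    using cyc_hom_dcw_eq_gap_sum[OF h, of k "j * k"] by (simp add: f_def w_def add.commute)
  have f_periodic: "f (j + n) = f j" for j
  proof -
    have "(j + n) * k = j * k + k * n" "Suc (j + n) * k = Suc j * k + k * n"
      by (simp_all add: algebra_simps)
    then have "(j + n) * k mod n = j * k mod n" "Suc (j + n) * k mod n = Suc j * k mod n"
      by (simp_all only: mod_mult_self1)
    then show ?thesis by (simp only: f_def w_def)
  qed
  have "(\<Sum>j<n. f j) = (\<Sum>j<k. \<Sum>t<n. cyc_gap h n (j * n + t))"
    by (simp only: f_gaps flip: sum_lessThan_mult_blocks) (simp add: mult.commute)
  also have "\<dots> = real k"
    using cyc_gap_sum[OF h, of 0] sum_periodic_block[of "cyc_gap h n" n, OF cyc_gap_periodic]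
    by simp
  finally have "real q * real k = (\<Sum>i<q * n. f i)"
    by (simp add: sum_lessThan_mult_blocks sum_periodic_block[of f n, OF f_periodic])
  also have "\<dots> = (\<Sum>b<n. displacement (\<lambda>i. w (b * q + i)) q)"
    by (simp add: mult.commute[of q] sum_lessThan_mult_blocks displacement_def f_def)
  also have "\<dots> \<le> (\<Sum>b<n. M)"
  proof (rule sum_mono)
    fix b
    have "walk E q (w (b * q)) (\<lambda>i. w (b * q + i))" using wstep by (simp add: walk_def)
    then show "displacement (\<lambda>i. w (b * q + i)) q \<le> M"
      using gamma_ge_displacement bound[OF wV] order_trans by blast
  qed
  finally show ?thesis by simp
qed

lemma wf_le_gamma_bound:
  assumes bound: "\<And>y. y \<in> V \<Longrightarrow> gamma E q y \<le> M" and "0 \<le> M" "0 < q"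
  shows "wf V E \<le> M / real q"
proof (rule wf_le)
  fix W assume W: "W \<subseteq> V" "finite W"
  show "wf_fin (induced E W) \<le> M / real q"
  proof (rule wf_fin_le)
    fix n k h assume "cyc_hom n k (induced E W) h"
    then have "cyc_hom n k E h" by (rule cyc_hom_mono) (simp add: induced_def)
    then have "real q * real k \<le> real n * M" and "0 < n"
      using cyc_hom_gamma_bound bound by (auto simp: cyc_hom_def)
    then show "real k / real n \<le> M / real q"
      using \<open>0 < q\<close> by (simp add: field_simps mult.commute)
  qed (use assms in simp)
qed

end

context closed_continuous_cyclic
begin

lemma gamma_attains_extrema:
  assumes "V \<noteq> {}"
  shows "\<exists>x\<in>V. \<forall>y\<in>V. gamma E m y \<le> gamma E m x" "\<exists>x\<in>V. \<forall>y\<in>V. gamma E m x \<le> gamma E m y"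
proof -
  define K where "K = lift V \<inter> {0..1}"
  have V_K: "V \<subseteq> K" and K_V: "x \<in> K \<Longrightarrow> frac x \<in> V" for x
    using V_subset by (auto simp: K_def mem_lift_iff)
  have K: "compact K" "K \<noteq> {}" "continuous_on K (\<lambda>x. gamma E m (frac x))"
    using assms closed_lift continuous_E V_K
    by (auto simp: K_def continuous_graph_def compact_Int_closed intro: continuous_on_subset)
  obtain x where "x \<in> K" "\<forall>y\<in>K. gamma E m (frac y) \<le> gamma E m (frac x)"
    using continuous_attains_sup[OF K] by blast
  then show "\<exists>x\<in>V. \<forall>y\<in>V. gamma E m y \<le> gamma E m x"
    using V_K K_V by (metis frac_vertex subsetD)
  obtain x where "x \<in> K" "\<forall>y\<in>K. gamma E m (frac x) \<le> gamma E m (frac y)"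
    using continuous_attains_inf[OF K] by blast
  then show "\<exists>x\<in>V. \<forall>y\<in>V. gamma E m x \<le> gamma E m y"
    using V_K K_V by (metis frac_vertex subsetD)
qed

lemma gamma_max_ge_rotation:
  assumes wf: "wf V E = real p / real q" and "0 < q" "V \<noteq> {}"
  shows "\<exists>a\<in>V. real p \<le> gamma E q a"
proof (rule ccontr)
  assume "\<not> ?thesis"
  moreover obtain x where x: "x \<in> V" "\<And>y. y \<in> V \<Longrightarrow> gamma E q y \<le> gamma E q x"
    using gamma_attains_extrema(1)[OF \<open>V \<noteq> {}\<close>] by blast
  ultimately have "gamma E q x < real p" by auto
  moreover have "wf V E \<le> gamma E q x / real q"
    using x \<open>0 < q\<close> by (intro wf_le_gamma_bound gamma_nonneg) auto
  ultimately show False using wf \<open>0 < q\<close> by (simp add: divide_le_cancel)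
qed

end

section \<open>Greedy orbits of finite cyclic graphs\<close>

lemma strict_mono_surj_int_eq_shift:
  fixes \<tau> :: "int \<Rightarrow> int"
  assumes mono: "strict_mono \<tau>" and surj: "surj \<tau>"
  shows "\<tau> i = i + \<tau> 0"
proof -
  have step: "\<tau> (a + 1) = \<tau> a + 1" for a
  proof (rule ccontr)
    assume "\<tau> (a + 1) \<noteq> \<tau> a + 1"
    moreover have "\<tau> a < \<tau> (a + 1)" using mono by (simp add: strict_mono_def)
    moreover obtain m where m: "\<tau> m = \<tau> a + 1" using surj by (metis surj_def)
    ultimately have "\<tau> a < \<tau> m" "\<tau> m < \<tau> (a + 1)" using m by simp_all
    then have "a < m" "m < a + 1" using mono by (simp_all add: strict_mono_less)
    then show False by simp
  qed
  show ?thesis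
  proof (induction i rule: int_induct[where k = 0])
    case (step2 i) then show ?case using step[of "i - 1"] by simp
  qed (simp_all add: step)
qed

lemma strict_mono_conjugate_shift:
  fixes e :: "int \<Rightarrow> real"
  assumes e: "strict_mono e"
    and into: "\<And>i. \<exists>j. G (e i) = e j" and onto: "\<And>j. \<exists>i. G (e i) = e j"
    and G_mono: "\<And>i j. i < j \<Longrightarrow> G (e i) < G (e j)"
  obtains c where "\<And>i. G (e i) = e (i + c)"
proof -
  define \<tau> where "\<tau> i = (SOME j. G (e i) = e j)" for i
  have \<tau>: "G (e i) = e (\<tau> i)" for i
    unfolding \<tau>_def by (rule someI_ex[OF into])
  have "strict_mono \<tau>"
  proof (rule strict_monoI)
    fix i j :: int assume "i < j"
    then have "e (\<tau> i) < e (\<tau> j)" using G_mono by (simp flip: \<tau>)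
    then show "\<tau> i < \<tau> j" using e by (simp add: strict_mono_less)
  qed
  moreover have "surj \<tau>"
  proof -
    have "\<exists>i. j = \<tau> i" for j
      using onto[of j] strict_mono_eq[OF e] by (auto simp: \<tau>)
    then show ?thesis by (simp add: surj_def)
  qed
  ultimately have shift: "\<tau> i = i + \<tau> 0" for i by (rule strict_mono_surj_int_eq_shift)
  have "G (e i) = e (i + \<tau> 0)" for i using \<tau>[of i] shift[of i] by simp
  then show ?thesis by (rule that)
qed

text \<open>The increasing enumeration of \<open>{x. frac x \<in> A}\<close> by the integers, starting at
  \<open>Min A\<close>.\<close>

definition lift_enum :: "real set \<Rightarrow> int \<Rightarrow> real" where
  "lift_enum A i = sorted_list_of_set A ! nat (i mod int (card A)) + of_int (i div int (card A))"

lemma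
  assumes "finite A" "A \<noteq> {}" "A \<subseteq> {0..<1}"
  shows frac_lift_enum: "frac (lift_enum A i) \<in> A"
    and lift_enum_add_card: "lift_enum A (i + int (card A) * t) = lift_enum A i + of_int t"
proof -
  have n0: "0 < card A" using assms by (simp add: card_gt_0_iff)
  then have "nat (i mod int (card A)) < length (sorted_list_of_set A)"
    by (simp add: nat_less_iff)
  from nth_mem[OF this] have "sorted_list_of_set A ! nat (i mod int (card A)) \<in> A"
    using assms(1) by simp
  moreover from this have "sorted_list_of_set A ! nat (i mod int (card A)) \<in> {0..<1}"
    using assms(3) by blast
  ultimately show "frac (lift_enum A i) \<in> A"
    unfolding lift_enum_def frac_add_of_int_right by simp
  have "(i + int (card A) * t) mod int (card A) = i mod int (card A)"
    "(i + int (card A) * t) div int (card A) = i div int (card A) + t"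
    using n0 by simp_all
  then show "lift_enum A (i + int (card A) * t) = lift_enum A i + of_int t"
    by (simp add: lift_enum_def)
qed

lemma strict_mono_lift_enum:
  assumes "finite A" "A \<noteq> {}" "A \<subseteq> {0..<1}"
  shows "strict_mono (lift_enum A)"
proof (rule strict_monoI)
  fix i j :: int assume ij: "i < j"
  let ?n = "int (card A)" and ?as = "sorted_list_of_set A"
  have n0: "0 < ?n" using assms by (simp add: card_gt_0_iff)
  have idx: "nat (k mod ?n) < length ?as" for k
    using n0 assms(1) by (simp add: nat_less_iff)
  have in_unit: "?as ! nat (k mod ?n) \<in> {0..<1}" for k
    using nth_mem[OF idx[of k]] assms by auto
  have "i div ?n \<le> j div ?n" using ij n0 by (intro zdiv_mono1) auto
  then consider "i div ?n = j div ?n" | "i div ?n + 1 \<le> j div ?n" by linarith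
  then show "lift_enum A i < lift_enum A j"
  proof cases
    case 1
    have "j div ?n * ?n + i mod ?n = i" using 1 div_mult_mod_eq[of i ?n] by simp
    then have "nat (i mod ?n) < nat (j mod ?n)"
      using ij div_mult_mod_eq[of j ?n] pos_mod_sign[OF n0, of i] by linarith
    then have "?as ! nat (i mod ?n) < ?as ! nat (j mod ?n)"
      using sorted_wrt_nth_less[OF strict_sorted_list_of_set[of A] _ idx[of j]] by simp
    then show ?thesis using 1 by (simp add: lift_enum_def)
  next
    case 2
    then have "real_of_int (i div ?n) + 1 \<le> of_int (j div ?n)"
      by (metis of_int_1 of_int_add of_int_le_iff)
    then show ?thesis using in_unit[of i] in_unit[of j] by (simp add: lift_enum_def)
  qed
qed

lemma lift_enum_surj:
  assumes "finite A" "A \<subseteq> {0..<1}" "frac x \<in> A"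
  shows "\<exists>i. lift_enum A i = x"
proof -
  obtain r where r: "r < card A" "sorted_list_of_set A ! r = frac x"
    using assms by (metis in_set_conv_nth length_sorted_list_of_set set_sorted_list_of_set)
  define i where "i = \<lfloor>x\<rfloor> * int (card A) + int r"
  have "i mod int (card A) = int r" "i div int (card A) = \<lfloor>x\<rfloor>"
    using r by (simp_all add: i_def)
  then have "lift_enum A i = x" using r by (simp add: lift_enum_def frac_def)
  then show ?thesis by blast
qed

locale finite_cyclic_digraph = cyclic_digraph +
  assumes finite_V: "finite V"
begin

definition greedy_gap :: "real \<Rightarrow> real" where
  "greedy_gap z = Max (insert 0 (dcw z ` {u. E z u}))"

definition greedy :: "real \<Rightarrow> real" where
  "greedy x = x + greedy_gap (frac x)"

lemma finite_out_dcw: "finite (dcw z ` {u. E z u})"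
  using finite_V edge_in_V by (auto intro: finite_subset)

lemma greedy_gap_ge: "E z u \<Longrightarrow> dcw z u \<le> greedy_gap z"
  using finite_out_dcw by (simp add: greedy_gap_def)

lemma greedy_ge: "x \<le> greedy x"
  using finite_out_dcw by (simp add: greedy_def greedy_gap_def)

lemma greedy_less: "greedy x < x + 1"
  using finite_out_dcw by (simp add: greedy_def greedy_gap_def dcw_less_one)

lemma greedy_add_of_int: "greedy (x + of_int k) = greedy x + of_int k"
  by (simp add: greedy_def)

lemma greedy_step:
  assumes "frac x \<in> V" "x < greedy x"
  obtains u where "E (frac x) u" "frac (greedy x) = u" "greedy x = x + dcw (frac x) u"
proof -
  have "greedy_gap (frac x) \<in> insert 0 (dcw (frac x) ` {u. E (frac x) u})"
    unfolding greedy_gap_def using finite_out_dcw by (intro Max_in) auto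
  moreover have "greedy_gap (frac x) \<noteq> 0" using assms(2) by (simp add: greedy_def)
  ultimately obtain u where u: "E (frac x) u" "greedy x = x + dcw (frac x) u"
    by (auto simp: greedy_def)
  moreover have "u \<in> V" using u(1) edge_in_V by blast
  then have "frac (greedy x) = u"
    using u(2) V_subset frac_add_dcw[of u x] by auto
  ultimately show ?thesis using that by blast
qed

lemma frac_greedy_in_V: "frac x \<in> V \<Longrightarrow> frac (greedy x) \<in> V"
  using greedy_ge greedy_step edge_in_V by (metis order_le_less)

lemma frac_funpow_greedy_in_V: "frac x \<in> V \<Longrightarrow> frac ((greedy ^^ m) x) \<in> V"
  by (induction m) (simp_all add: frac_greedy_in_V)

lemma greedy_ge_Nplus: "u \<in> Nplus E (frac X) \<Longrightarrow> X + dcw (frac X) u \<le> greedy X"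
  using greedy_gap_ge greedy_ge by (auto simp: greedy_def Nplus_def)

lemma greedy_mono:
  assumes X: "frac X \<in> V" and Y: "frac Y \<in> V" and XY: "X \<le> Y"
  shows "greedy X \<le> greedy Y"
proof (cases "X < greedy X")
  case True
  then obtain u where u: "E (frac X) u" "greedy X = X + dcw (frac X) u"
    using greedy_step[OF X] by blast
  then have "u \<in> Nplus E (frac X)" by (simp add: Nplus_def)
  from step_push[OF X this Y XY] u(2) show ?thesis
    using greedy_ge_Nplus[of _ Y] by fastforce
qed (use XY greedy_ge[of Y] in simp)

lemma walk_le_funpow_greedy:
  assumes w: "walk E m (frac X) w" and X: "frac X \<in> V"
  shows "X + displacement w m \<le> (greedy ^^ m) X"
proof -
  have "X + displacement w i \<le> (greedy ^^ i) X" if "i \<le> m" for i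
    using that
  proof (induction i)
    case (Suc i)
    define Q where "Q = X + displacement w i"
    have fQ: "frac Q = w i" and QV: "frac Q \<in> V"
      using frac_add_displacement[OF w X] walk_in_V[OF w X] Suc.prems by (simp_all add: Q_def)
    have "X + displacement w (Suc i) = Q + dcw (frac Q) (w (Suc i))"
      using fQ by (simp add: Q_def displacement_Suc)
    also have "\<dots> \<le> greedy Q"
      using w Suc.prems fQ by (intro greedy_ge_Nplus) (simp add: walk_def)
    also have "\<dots> \<le> greedy ((greedy ^^ i) X)"
      using greedy_mono[OF QV frac_funpow_greedy_in_V[OF X]] Suc by (simp add: Q_def)
    finally show ?case by simp
  qed simp
  then show ?thesis by simp
qed

lemma funpow_greedy_gt:
  assumes good: "\<And>z. z \<in> V \<Longrightarrow> real p < gamma E q z" and X: "frac X \<in> V" and "0 < j"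
  shows "X + real j * real p < (greedy ^^ (j * q)) X"
proof -
  have step: "Y + real p < (greedy ^^ q) Y" if Y: "frac Y \<in> V" for Y
  proof -
    obtain w where w: "walk E q (frac Y) w" "real p < displacement w q"
      using gamma_approx[of "gamma E q (frac Y) - real p" E q "frac Y"] good[OF Y] by auto
    show ?thesis using walk_le_funpow_greedy[OF w(1) Y] w(2) by simp
  qed
  show ?thesis
    using \<open>0 < j\<close>
  proof (induction j rule: nat_induct_non_zero)
    case (Suc j)
    then show ?case
      using step[OF frac_funpow_greedy_in_V[OF X, of "j * q"]]
      by (simp add: funpow_add algebra_simps)
  qed (use step[OF X] in simp)
qed

end

text \<open>A greedy orbit, enumerated increasingly by \<open>e\<close> with \<open>n\<close> points per turn, on which the
  greedy step advances the index by \<open>c\<close>.\<close>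

locale greedy_rotation = finite_cyclic_digraph +
  fixes e :: "int \<Rightarrow> real" and n :: nat and c :: int
  assumes e_mono: "strict_mono e" and frac_e_in_V: "\<And>i. frac (e i) \<in> V"
    and e_period: "\<And>i t. e (i + int n * t) = e i + of_int t"
    and greedy_e: "\<And>i. greedy (e i) = e (i + c)" and c_pos: "0 < c"
begin

lemma e_add_n: "e (i + int n) = e i + 1"
  using e_period[of i 1] by simp

lemma c_less_n: "c < int n"
proof -
  have "e c < e (int n)"
    using greedy_e[of 0] greedy_less[of "e 0"] e_add_n[of 0] by simp
  then show ?thesis using e_mono by (simp add: strict_mono_less)
qed

lemma frac_e_mod: "frac (e (int (j mod n))) = frac (e (int j))"
proof -
  have "int j = int (j mod n) + int n * int (j div n)"
    by (metis mod_mult_div_eq of_nat_add of_nat_mult)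
  then show ?thesis
    using e_period[of "int (j mod n)" "int (j div n)"] frac_add_of_int_right
    by (metis of_int_of_nat_eq)
qed

text \<open>Everything strictly between \<open>e i\<close> and its greedy image \<open>e (i + c)\<close> is an
  out-neighbour of \<open>frac (e i)\<close>, by cyclicity.\<close>

lemma greedy_e_edge:
  assumes "0 < s" "s \<le> c"
  shows "E (frac (e i)) (frac (e (i + s)))"
proof -
  have "e i < greedy (e i)" using greedy_e c_pos e_mono by (simp add: strict_mono_less)
  then obtain u where u: "E (frac (e i)) u" "frac (greedy (e i)) = u"
    "greedy (e i) = e i + dcw (frac (e i)) u"
    using greedy_step[OF frac_e_in_V] by blast
  show ?thesis
  proof (cases "s = c")
    case False
    then have lt: "e i < e (i + s)" "e (i + s) < greedy (e i)"
      using assms greedy_e e_mono by (simp_all add: strict_mono_less)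
    have "dcw (frac (e i)) (frac (e (i + s))) = e (i + s) - e i"
      using lt greedy_less[of "e i"] by (intro dcw_frac_frac_eq) auto
    then have "cbetween (frac (e i)) (frac (e (i + s))) u"
      using lt u(3) by (simp add: cbetween_def)
    then show ?thesis using cyclic_edges[OF u(1) frac_e_in_V] by blast
  qed (use u greedy_e in simp)
qed

lemma double_c_less_n: "2 * c < int n"
proof (rule ccontr)
  assume "\<not> 2 * c < int n"
  then have "E (frac (e c)) (frac (e (c + (int n - c))))"
    using c_less_n by (intro greedy_e_edge) auto
  then have "E (frac (e c)) (frac (e 0))"
    using e_add_n[of 0] by (simp add: frac_1_eq)
  moreover have "E (frac (e 0)) (frac (e c))"
    using greedy_e_edge[of c 0] c_pos by simp
  ultimately show False using no_opposite_edges by blast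
qed

lemma cyc_hom_greedy_rotation: "cyc_hom n (nat c) E (\<lambda>i. frac (e (int i)))"
  unfolding cyc_hom_def
proof (intro conjI allI impI)
  show "1 \<le> nat c" "2 * nat c < n" using c_pos double_c_less_n by linarith+
  fix i s assume "i < n" and s: "1 \<le> s \<and> s \<le> nat c"
  then have "0 < int s" "int s \<le> c" by linarith+
  then show "E (frac (e (int i))) (frac (e (int ((i + s) mod n))))"
    using greedy_e_edge[of "int s" "int i"] by (simp add: frac_e_mod)
next
  have n1: "1 < n" using c_pos double_c_less_n by linarith
  have "dcw (frac (e (int i))) (frac (e (int ((i + 1) mod n)))) = e (int (Suc i)) - e (int i)"
    for i
  proof -
    have "e (int (Suc i)) < e (int i + int n)" using n1 e_mono by (simp add: strict_mono_less)
    moreover have "e (int i) < e (int (Suc i))" using e_mono by (simp add: strict_mono_less)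
    ultimately show ?thesis using e_add_n frac_e_mod[of "Suc i"] by (simp add: dcw_frac_frac_eq)
  qed
  then have "(\<Sum>i<n. dcw (frac (e (int i))) (frac (e (int ((i + 1) mod n)))))
      = e (int n) - e (int 0)"
    using sum_lessThan_telescope[of "\<lambda>j. e (int j)" n] by simp
  then show "(\<Sum>i<n. dcw (frac (e (int i))) (frac (e (int ((i + 1) mod n))))) = 1"
    using e_add_n[of 0] by simp
qed

end

lemma (in finite_cyclic_digraph) greedy_periodic_point:
  assumes "V \<noteq> {}"
  obtains Z P R where "frac Z \<in> V" "0 < P" "(greedy ^^ P) Z = Z + of_int R"
proof -
  obtain x0 where x0: "frac x0 \<in> V" using assms frac_vertex by (metis ex_in_conv)
  define \<phi> where "\<phi> i = frac ((greedy ^^ i) x0)" for i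
  have "\<phi> ` {..card V} \<subseteq> V" using frac_funpow_greedy_in_V[OF x0] by (auto simp: \<phi>_def)
  then have "card (\<phi> ` {..card V}) < card {..card V}"
    using finite_V card_mono by (metis card_atMost le_imp_less_Suc)
  then obtain a b where ab: "a < b" "\<phi> a = \<phi> b"
    using pigeonhole[of \<phi> "{..card V}"] unfolding inj_on_def by (metis linorder_neqE_nat)
  define Z where "Z = (greedy ^^ a) x0"
  obtain R where "(greedy ^^ b) x0 = Z + of_int R"
    using ab(2)[symmetric] unfolding \<phi>_def Z_def by (rule frac_eqE)
  moreover have "(greedy ^^ (b - a)) Z = (greedy ^^ b) x0"
    using ab(1) by (simp add: Z_def flip: funpow_add comp_apply[of "greedy ^^ (b - a)"])
  ultimately show ?thesis
    using that[of Z "b - a" R] ab(1) frac_funpow_greedy_in_V[OF x0] by (simp add: Z_def)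
qed

locale greedy_cycle = finite_cyclic_digraph +
  fixes Z :: real and P :: nat and R :: int
  assumes Z_in_V: "frac Z \<in> V" and P_pos: "0 < P" and period: "(greedy ^^ P) Z = Z + of_int R"
begin

definition orbit :: "real set" where
  "orbit = (\<lambda>i. frac ((greedy ^^ i) Z)) ` {..<P}"

lemma finite_orbit: "finite orbit"
  and orbit_nonempty: "orbit \<noteq> {}"
  and orbit_subset_V: "orbit \<subseteq> V"
  and orbit_subset_unit: "orbit \<subseteq> {0..<1}"
  using P_pos frac_funpow_greedy_in_V[OF Z_in_V] V_subset by (auto simp: orbit_def)

lemma funpow_greedy_period:
  "(greedy ^^ P) ((greedy ^^ i) Z + of_int k) = (greedy ^^ i) Z + of_int (R + k)"
proof -
  have "(greedy ^^ P) ((greedy ^^ i) Z) = (greedy ^^ i) ((greedy ^^ P) Z)"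
    by (metis add.commute comp_apply funpow_add)
  then show ?thesis
    using period funpow_add_of_int[OF greedy_add_of_int] by simp
qed

lemma mem_orbit_iff: "frac x \<in> orbit \<longleftrightarrow> (\<exists>i<P. \<exists>k. x = (greedy ^^ i) Z + of_int k)"
  by (auto simp: orbit_def elim!: frac_eqE)

lemma greedy_orbit_into: "frac x \<in> orbit \<Longrightarrow> frac (greedy x) \<in> orbit"
proof -
  assume "frac x \<in> orbit"
  then obtain i k where ik: "i < P" "x = (greedy ^^ i) Z + of_int k" by (auto simp: mem_orbit_iff)
  then have gx: "greedy x = (greedy ^^ Suc i) Z + of_int k" by (simp add: greedy_add_of_int)
  show ?thesis
  proof (cases "Suc i < P")
    case False
    then have "Suc i = P" using ik by simp
    then have "greedy x = (greedy ^^ 0) Z + of_int (R + k)" using gx period by simp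
    then show ?thesis using P_pos mem_orbit_iff by blast
  qed (use gx mem_orbit_iff in blast)
qed

lemma greedy_orbit_onto: "frac y \<in> orbit \<Longrightarrow> \<exists>x. frac x \<in> orbit \<and> greedy x = y"
proof -
  assume "frac y \<in> orbit"
  then obtain i k where ik: "i < P" "y = (greedy ^^ i) Z + of_int k" by (auto simp: mem_orbit_iff)
  show ?thesis
  proof (cases i)
    case 0
    have "P = Suc (P - 1)" "P - 1 < P" using P_pos by simp_all
    then have "(greedy ^^ P) Z = greedy ((greedy ^^ (P - 1)) Z)"
      by (metis funpow.simps(2) comp_apply)
    then have "greedy ((greedy ^^ (P - 1)) Z + of_int (k - R)) = y"
      using greedy_add_of_int[of "(greedy ^^ (P - 1)) Z" "k - R"] ik 0 period by simp
    moreover have "frac ((greedy ^^ (P - 1)) Z + of_int (k - R)) \<in> orbit"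
      using \<open>P - 1 < P\<close> unfolding mem_orbit_iff by blast
    ultimately show ?thesis by blast
  next
    case (Suc j)
    then have "greedy ((greedy ^^ j) Z + of_int k) = y" "j < P"
      using ik by (simp_all add: greedy_add_of_int)
    moreover have "frac ((greedy ^^ j) Z + of_int k) \<in> orbit"
      using \<open>j < P\<close> unfolding mem_orbit_iff by blast
    ultimately show ?thesis by blast
  qed
qed

text \<open>Two points of a periodic orbit with the same greedy image would have the same
  image under the \<open>P\<close>-th iterate, which is a translation on the orbit.\<close>

lemma greedy_orbit_strict_mono:
  assumes x: "frac x \<in> orbit" and y: "frac y \<in> orbit" and "x < y"
  shows "greedy x < greedy y"
proof -
  have "greedy x \<le> greedy y"
    using assms orbit_subset_V by (intro greedy_mono) auto
  moreover have "greedy x \<noteq> greedy y"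
  proof
    assume eq: "greedy x = greedy y"
    have per: "(greedy ^^ P) z = z + of_int R" if "frac z \<in> orbit" for z
      using that funpow_greedy_period by (auto simp: mem_orbit_iff)
    have "P = Suc (P - 1)" using P_pos by simp
    then have "(greedy ^^ P) z = (greedy ^^ (P - 1)) (greedy z)" for z
      by (metis funpow_Suc_right comp_apply)
    then have "(greedy ^^ P) x = (greedy ^^ P) y" using eq by simp
    then have "x + of_int R = y + of_int R" using per[OF x] per[OF y] by simp
    then show False using \<open>x < y\<close> by simp
  qed
  ultimately show ?thesis by simp
qed

lemma greedy_enum_shift:
  obtains c where "\<And>i. greedy (lift_enum orbit i) = lift_enum orbit (i + c)"
    "int P * c = int (card orbit) * R"
proof -
  let ?e = "lift_enum orbit"
  note A = finite_orbit orbit_nonempty orbit_subset_unit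
  have e: "strict_mono ?e" and frac_e: "\<And>i. frac (?e i) \<in> orbit"
    using strict_mono_lift_enum[OF A] frac_lift_enum[OF A] by blast+
  have surj: "frac x \<in> orbit \<Longrightarrow> \<exists>i. ?e i = x" for x
    using lift_enum_surj[OF finite_orbit orbit_subset_unit] .
  obtain c where c: "\<And>i. greedy (?e i) = ?e (i + c)"
  proof (rule strict_mono_conjugate_shift[OF e])
    show "\<exists>j. greedy (?e i) = ?e j" for i
      using surj[OF greedy_orbit_into[OF frac_e]] by metis
    show "\<exists>i. greedy (?e i) = ?e j" for j
      using greedy_orbit_onto[OF frac_e[of j]] surj by metis
    show "i < j \<Longrightarrow> greedy (?e i) < greedy (?e j)" for i j
      using e by (intro greedy_orbit_strict_mono frac_e) (simp add: strict_mono_less)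
  qed blast
  have iter: "(greedy ^^ m) (?e i) = ?e (i + int m * c)" for m i
    by (induction m) (simp_all add: c algebra_simps)
  have "frac Z \<in> orbit" using P_pos unfolding mem_orbit_iff by force
  then obtain i0 where i0: "?e i0 = Z" using surj by blast
  have "?e (i0 + int P * c) = ?e (i0 + int (card orbit) * R)"
    using iter[of P i0] i0 period lift_enum_add_card[OF A] by simp
  then have "int P * c = int (card orbit) * R"
    using strict_mono_eq[OF e] by simp
  with c show ?thesis using that by blast
qed

lemma card_orbit_pos: "0 < card orbit"
  using finite_orbit orbit_nonempty by (simp add: card_gt_0_iff)

lemma greedy_rotation_orbit:
  assumes "\<And>i. greedy (lift_enum orbit i) = lift_enum orbit (i + c)" "0 < c"
  shows "greedy_rotation V E (lift_enum orbit) (card orbit) c"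
  using assms orbit_subset_V strict_mono_lift_enum[OF finite_orbit orbit_nonempty orbit_subset_unit]
    frac_lift_enum[OF finite_orbit orbit_nonempty orbit_subset_unit]
    lift_enum_add_card[OF finite_orbit orbit_nonempty orbit_subset_unit]
  by unfold_locales auto

lemma greedy_period_gt:
  assumes good: "\<And>z. z \<in> V \<Longrightarrow> real p < gamma E q z"
  shows "int P * int p < int q * R"
proof -
  have "(greedy ^^ (q * P)) Z = Z + of_int (int q * R)"
    using funpow_translation_point[OF funpow_add_of_int[OF greedy_add_of_int] period, of q]
    by (simp add: funpow_mult mult.commute)
  then have "Z + real P * real p < Z + of_int (int q * R)"
    using funpow_greedy_gt[OF good Z_in_V P_pos] by (simp add: mult.commute)
  then have "real_of_int (int P * int p) < real_of_int (int q * R)" by simp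
  then show ?thesis by (simp only: of_int_less_iff)
qed

end

lemma (in finite_cyclic_digraph) wf_fin_gt_of_gamma_gt:
  assumes good: "\<And>z. z \<in> V \<Longrightarrow> real p < gamma E q z" and "V \<noteq> {}"
  shows "real p / real q < wf_fin E"
proof -
  obtain Z P R where ZPR: "frac Z \<in> V" "0 < P" "(greedy ^^ P) Z = Z + of_int R"
    using greedy_periodic_point[OF \<open>V \<noteq> {}\<close>] by blast
  interpret greedy_cycle V E Z P R
    using ZPR by unfold_locales
  let ?n = "card orbit"
  obtain c where c: "\<And>i. greedy (lift_enum orbit i) = lift_enum orbit (i + c)"
    and Pc: "int P * c = int ?n * R"
    using greedy_enum_shift by blast
  have PpqR: "int P * int p < int q * R" by (rule greedy_period_gt[OF good])
  have "0 < q"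
  proof (rule ccontr)
    assume "\<not> 0 < q"
    then show False using good[OF ZPR(1)] by simp
  qed
  have "0 < int q * R" using PpqR by (smt (verit) of_nat_0_le_iff mult_nonneg_nonneg)
  then have "0 < R" using \<open>0 < q\<close> by (simp add: zero_less_mult_iff)
  then have "0 < int P * c" using card_orbit_pos Pc by simp
  then have "0 < c" using ZPR(2) by (simp add: zero_less_mult_iff)
  interpret greedy_rotation V E "lift_enum orbit" ?n c
    using greedy_rotation_orbit[OF c \<open>0 < c\<close>] .
  have "int P * (int ?n * int p) = int ?n * (int P * int p)" by (simp add: algebra_simps)
  also have "\<dots> < int ?n * (int q * R)" using PpqR card_orbit_pos by simp
  also have "\<dots> = int P * (c * int q)" using Pc by (simp add: algebra_simps)
  finally have "int ?n * int p < c * int q" using ZPR(2) by simp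
  then have "real_of_int (int ?n * int p) < real_of_int (c * int q)" by (simp only: of_int_less_iff)
  then have "real ?n * real p < real (nat c) * real q" using \<open>0 < c\<close> by simp
  then have "real p / real q < real (nat c) / real ?n"
    using \<open>0 < q\<close> card_orbit_pos by (simp add: field_simps)
  then show ?thesis
    using cyc_hom_le_wf_fin[OF cyc_hom_greedy_rotation] by linarith
qed

section \<open>Winding fraction bounded by the minimal displacement\<close>

lemma finite_lower_net:
  assumes V: "V \<subseteq> {0..<1}" "closed (lift V)" and "0 < \<epsilon>"
  obtains Y where "finite Y" "Y \<subseteq> V" "\<And>z. z \<in> V \<Longrightarrow> \<exists>y\<in>Y. y \<le> z \<and> z < y + \<epsilon>"
proof -
  obtain N :: nat where N: "0 < N" "inverse (real N) < \<epsilon>"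
    using ex_inverse_of_nat_less[OF \<open>0 < \<epsilon>\<close>] by auto
  define C where "C j = lift V \<inter> {real j / real N .. (real j + 1) / real N}" for j :: nat
  define J where "J = {j. j < N \<and> V \<inter> C j \<noteq> {}}"
  have Inf_C: "Inf (C j) \<in> V" "\<And>z. z \<in> C j \<Longrightarrow> Inf (C j) \<le> z" "real j / real N \<le> Inf (C j)"
    if jJ: "j \<in> J" for j
  proof -
    obtain z where z: "z \<in> V" "z \<in> C j" using jJ by (auto simp: J_def)
    have bdd: "bdd_below (C j)" by (auto simp: C_def intro: bdd_belowI[where m = "real j / real N"])
    have "closed (C j)" using V(2) by (simp add: C_def closed_Int)
    then have InfC: "Inf (C j) \<in> C j"
      using closed_contains_Inf[OF _ bdd] z(2) by blast
    then show lo: "real j / real N \<le> Inf (C j)" by (simp add: C_def)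
    have "0 \<le> Inf (C j)" using lo by (meson order_trans zero_le_divide_iff of_nat_0_le_iff)
    moreover have "Inf (C j) < 1" using cInf_lower[OF z(2) bdd] z(1) V(1) by auto
    moreover have "frac (Inf (C j)) \<in> V" using InfC lift_iff[OF V(1)] by (simp add: C_def)
    ultimately show "Inf (C j) \<in> V" by (simp add: frac_eq)
    show "\<And>z. z \<in> C j \<Longrightarrow> Inf (C j) \<le> z" using bdd by (rule cInf_lower[rotated])
  qed
  show ?thesis
  proof (rule that[of "(\<lambda>j. Inf (C j)) ` J"])
    show "finite ((\<lambda>j. Inf (C j)) ` J)" by (simp add: J_def)
    show "(\<lambda>j. Inf (C j)) ` J \<subseteq> V" using Inf_C by blast
    fix z assume z: "z \<in> V"
    define j where "j = nat \<lfloor>z * real N\<rfloor>"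
    have z01: "0 \<le> z" "z < 1" using z V(1) by auto
    have j: "real j \<le> z * real N" "z * real N < real j + 1"
      using z01 N(1) by (simp_all add: j_def)
    moreover have "z * real N < real N" using z01 N(1) by simp
    ultimately have "j < N" by linarith
    have "z \<in> lift V" using z lift_iff[OF V(1)] z01 by (simp add: frac_eq)
    moreover have "real j / real N \<le> z" "z \<le> (real j + 1) / real N"
      using j N(1) by (simp_all add: field_simps)
    ultimately have zC: "z \<in> C j" by (simp add: C_def)
    then have jJ: "j \<in> J" using \<open>j < N\<close> z by (auto simp: J_def)
    have "z < real j / real N + inverse (real N)"
      using j N(1) by (simp add: field_simps)
    then have "z < Inf (C j) + \<epsilon>" using Inf_C(3)[OF jJ] N(2) by linarith
    then show "\<exists>y\<in>(\<lambda>j. Inf (C j)) ` J. y \<le> z \<and> z < y + \<epsilon>"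
      using Inf_C(2)[OF jJ zC] jJ by blast
  qed
qed

context cyclic_digraph
begin

lemma cyclic_graph_induced: "W \<subseteq> V \<Longrightarrow> cyclic_graph W (induced E W)"
  unfolding cyclic_graph_def digraph_on_def induced_def
  using V_subset no_loop no_opposite_edges cyclic_edges by blast

lemma walk_induced:
  "walk E m z w \<Longrightarrow> (\<And>i. i \<le> m \<Longrightarrow> w i \<in> W) \<Longrightarrow> walk (induced E W) m z w"
  unfolding walk_def Nplus_def induced_def by auto

end

context closed_continuous_cyclic
begin

text \<open>Take a finite \<open>\<delta>/2\<close>-net from below together with near optimal walks from its points;
  pushing these walks up to any vertex of the resulting finite set still gains more than \<open>p\<close>.\<close>

lemma finite_subgraph_gamma_gt:
  assumes \<delta>: "0 < \<delta>" "\<And>y. y \<in> V \<Longrightarrow> real p + \<delta> \<le> gamma E q y" and "V \<noteq> {}"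
  obtains W where "finite W" "W \<subseteq> V" "W \<noteq> {}" "\<And>z. z \<in> W \<Longrightarrow> real p < gamma (induced E W) q z"
proof -
  obtain Y where Y: "finite Y" "Y \<subseteq> V" "\<And>z. z \<in> V \<Longrightarrow> \<exists>y\<in>Y. y \<le> z \<and> z < y + \<delta> / 2"
    using finite_lower_net[OF V_subset closed_lift, of "\<delta> / 2"] \<delta>(1) by auto
  have "\<exists>w. walk E q y w \<and> real p + \<delta> / 2 < displacement w q" if "y \<in> Y" for y
  proof -
    obtain w where w: "walk E q y w" "gamma E q y - \<delta> / 2 < displacement w q"
      using gamma_approx[of "\<delta> / 2" E q y] \<delta>(1) by auto
    show ?thesis using w \<delta>(2)[of y] that Y(2) by (intro exI[of _ w]) auto
  qed
  then obtain wk where wk: "\<And>y. y \<in> Y \<Longrightarrow> walk E q y (wk y)"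
    "\<And>y. y \<in> Y \<Longrightarrow> real p + \<delta> / 2 < displacement (wk y) q"
    by metis
  define W where "W = (\<Union>y\<in>Y. wk y ` {..q})"
  have "wk y i \<in> V" if "y \<in> Y" "i \<le> q" for y i
    using walk_in_V[OF wk(1)[OF that(1)]] that Y(2) by auto
  moreover have "y \<in> wk y ` {..q}" if "y \<in> Y" for y
    using wk(1)[OF that] by (auto simp: walk_def intro: rev_image_eqI[of 0])
  ultimately have W: "finite W" "W \<subseteq> V" "Y \<subseteq> W"
    using Y(1) by (auto simp: W_def)
  interpret CW: cyclic_digraph W "induced E W"
    using cyclic_graph_induced[OF W(2)] by unfold_locales
  have "real p < gamma (induced E W) q z" if z: "z \<in> W" for z
  proof -
    obtain y where y: "y \<in> Y" "y \<le> z" "z < y + \<delta> / 2" using Y(3) z W(2) by blast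
    have yz: "y \<in> V" "z \<in> V" using y(1) z W(2,3) by auto
    have "wk y i \<in> W" if "i \<le> q" for i using y(1) that by (auto simp: W_def)
    then have "walk (induced E W) q (frac y) (wk y)"
      using walk_induced[OF wk(1)[OF y(1)], of W] yz by simp
    moreover have "frac y \<in> W" "frac z \<in> W" using y(1) z W(3) yz by auto
    ultimately obtain w' where w': "walk (induced E W) q (frac z) w'"
        "z + displacement w' q = max z (y + displacement (wk y) q)"
      using CW.walk_push[of q y "wk y" z] y(2) by blast
    then have "real p < displacement w' q" using wk(2)[OF y(1)] y(3) by (auto simp: max_def)
    then show ?thesis using gamma_ge_displacement[OF w'(1)] yz by simp
  qed
  moreover have "W \<noteq> {}" using Y(3) W(3) \<open>V \<noteq> {}\<close> by blast
  ultimately show ?thesis using that W(1,2) by blast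
qed

lemma gamma_min_le_rotation:
  assumes wf: "wf V E = real p / real q" and "V \<noteq> {}"
  shows "\<exists>b\<in>V. gamma E q b \<le> real p"
proof (rule ccontr)
  assume no_b: "\<not> ?thesis"
  obtain x where x: "x \<in> V" "\<And>y. y \<in> V \<Longrightarrow> gamma E q x \<le> gamma E q y"
    using gamma_attains_extrema(2)[OF \<open>V \<noteq> {}\<close>] by blast
  have \<delta>: "0 < gamma E q x - real p"
    "\<And>y. y \<in> V \<Longrightarrow> real p + (gamma E q x - real p) \<le> gamma E q y"
    using x no_b by auto
  obtain W where W: "finite W" "W \<subseteq> V" "W \<noteq> {}"
    and gt: "\<And>z. z \<in> W \<Longrightarrow> real p < gamma (induced E W) q z"
    using finite_subgraph_gamma_gt[OF \<delta> \<open>V \<noteq> {}\<close>] by blast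
  interpret CW: finite_cyclic_digraph W "induced E W"
    using cyclic_graph_induced[OF W(2)] W(1) by unfold_locales
  have "real p / real q < wf_fin (induced E W)"
    using CW.wf_fin_gt_of_gamma_gt[OF gt W(3)] .
  then show False using wf_fin_induced_le_wf[OF W(2,1), of E] wf by simp
qed

end

theorem mainTheorem20:
  fixes V :: "real set" and E :: "real \<Rightarrow> real \<Rightarrow> bool" and p q :: nat
  assumes "cyclic_graph V E" and "closed_circ V" and "continuous_graph V E"
    and "q > 0" and "coprime p q" and "wf V E = real p / real q"
  shows "\<forall>v\<in>V. \<forall>i::nat.
           vstar E q (fmap E i v) = fmap E i (vstar E q v) \<and>
           (fmap E i (vstar E q v) = vstar E q v \<longleftrightarrow> q dvd i)"
proof (intro ballI allI)
  interpret closed_continuous_cyclic V E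
    using assms(1-3) by unfold_locales
  fix v i assume v: "v \<in> V"
  then have v_lift: "v \<in> lift V" and "V \<noteq> {}" by (auto simp: mem_lift_iff)
  obtain a where "a \<in> V" "real p \<le> gamma E q a"
    using gamma_max_ge_rotation[OF assms(6,4) \<open>V \<noteq> {}\<close>] by blast
  moreover obtain b where "b \<in> V" "gamma E q b \<le> real p"
    using gamma_min_le_rotation[OF assms(6) \<open>V \<noteq> {}\<close>] by blast
  ultimately obtain L where L: "L \<in> lift V" "gamma_lift E q L = L + real p"
    and lim: "(\<lambda>j. gamma_lift E (j * q) v - real j * real p) \<longlonglongrightarrow> L"
    using rotation_limit[OF _ _ _ _ v_lift] by blast
  have vstar: "vstar E q v = frac L"
    using vstar_frac_eq[OF v_lift lim] v by simp
  have "vstar E q (fmap E i v) = frac (gamma_lift E i L)"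
    using vstar_fmap[OF v_lift lim L(1)] v by simp
  moreover have "fmap E i (vstar E q v) = frac (gamma_lift E i L)"
    by (simp add: vstar fmap_frac_eq)
  ultimately show "vstar E q (fmap E i v) = fmap E i (vstar E q v) \<and>
      (fmap E i (vstar E q v) = vstar E q v \<longleftrightarrow> q dvd i)"
    using frac_gamma_lift_eq_iff_dvd[OF L assms(5)] vstar by simp
qed

end
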